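(* Let $\mathit{TS}_1=(\mathcal{S}_1,\mathcal{E}_1,\mathcal{I}_1,\to_1)$, $\mathit{TS}_2=(\mathcal{S}_2,\mathcal{E}_2,\mathcal{I}_2,\to_2)$ be LTSs and let $\psi\subseteq\mathcal{E}_1^\omega\times\mathcal{E}_2^\omega$ be a safety relation. If $(\mathcal{I}_1,\mathcal{I}_2,\psi)\in\texttt{fe}$, then for every $\tau_1\in\mathit{Traces}(\mathcal{I}_1)$ there exists $\tau_2\in\mathit{Traces}(\mathcal{I}_2)$ with $(\tau_1,\tau_2)\in\psi$.
   Context: LTS $(\mathcal{S},\mathcal{E},\mathcal{I},\to)$: states, observable events, initial state, and $\to\subseteq\mathcal{S}\times(\mathcal{E}\cup\{\emptyset\})\times\mathcal{S}$, label $\emptyset$ marking silent steps. $\to^*$ is the reflexive transitive closure of silent steps; for $e\in\mathcal{E}$, $s\overset{e}{\rightsquigarrow}s'$ means $s\to^*s''\xrightarrow{e}s'$ for some $s''$. $\mathit{Traces}(s)$ is the set of $\tau\in\mathcal{E}^\omega$ such that some $\pi\in\mathcal{S}^\omega$ has $\pi_0=s$ and $\pi_i\overset{\tau[i]}{\rightsquigarrow}\pi_{i+1}$ for all $i$. Safety closure $|\psi|_{\mathit{safe}}=\{(\tau_1,\tau_2)\mid\forall n.\exists\tau_1',\tau_2'.(\tau_1[0..n)\tau_1',\tau_2[0..n)\tau_2')\in\psi\}$ ($\tau[0..n)$ = prefix of length $n$); $\psi$ is a safety relation iff $|\psi|_{\mathit{safe}}\subseteq\psi$. Derivative $\Delta_{e_1,e_2}(\psi)=\{(\tau_1,\tau_2)\mid(e_1\tau_1,e_2\tau_2)\in\psi\}$.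 For $R\subseteq\mathcal{S}_1\times\mathcal{S}_2\times\mathcal{P}(\mathcal{E}_1^\omega\times\mathcal{E}_2^\omega)$: $\texttt{feF}(R)=\{(s_1,s_2,\psi)\mid\forall e_1,s_1'.\ s_1\overset{e_1}{\rightsquigarrow}_1s_1'\Rightarrow\exists e_2,s_2'.\ s_2\overset{e_2}{\rightsquigarrow}_2s_2'\wedge\Delta_{e_1,e_2}(\psi)\neq\emptyset\wedge(s_1',s_2',\Delta_{e_1,e_2}(\psi))\in R\}$, a monotone operator; $\texttt{fe}$ is its greatest fixed point. *)

theory Defs
  imports Main
begin

text \<open>A transition is labelled by an 'e option; None is the silent label.
  Infinite words (elements of E^omega) are functions nat => 'e.\<close>

record ('s, 'e) lts =
  init :: 's
  trans :: "'s \<Rightarrow> 'e option \<Rightarrow> 's \<Rightarrow> bool"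

definition silent_star :: "('s, 'e) lts \<Rightarrow> 's \<Rightarrow> 's \<Rightarrow> bool" where
  "silent_star TS = (\<lambda>s s'. trans TS s None s')\<^sup>*\<^sup>*"

definition weak_step :: "('s, 'e) lts \<Rightarrow> 's \<Rightarrow> 'e \<Rightarrow> 's \<Rightarrow> bool" where
  "weak_step TS s e s' \<longleftrightarrow> (\<exists>s''. silent_star TS s s'' \<and> trans TS s'' (Some e) s')"

definition Traces :: "('s, 'e) lts \<Rightarrow> 's \<Rightarrow> (nat \<Rightarrow> 'e) set" where
  "Traces TS s = {\<tau>. \<exists>\<pi> :: nat \<Rightarrow> 's. \<pi> 0 = s \<and> (\<forall>i. weak_step TS (\<pi> i) (\<tau> i) (\<pi> (Suc i)))}"

definition prefix_app :: "(nat \<Rightarrow> 'e) \<Rightarrow> nat \<Rightarrow> (nat \<Rightarrow> 'e) \<Rightarrow> (nat \<Rightarrow> 'e)" where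
  "prefix_app \<tau> n \<tau>' = (\<lambda>i. if i < n then \<tau> i else \<tau>' (i - n))"

definition safe_closure :: "((nat \<Rightarrow> 'e1) \<times> (nat \<Rightarrow> 'e2)) set \<Rightarrow> ((nat \<Rightarrow> 'e1) \<times> (nat \<Rightarrow> 'e2)) set" where
  "safe_closure \<psi> = {(\<tau>1, \<tau>2). \<forall>n. \<exists>\<tau>1' \<tau>2'. (prefix_app \<tau>1 n \<tau>1', prefix_app \<tau>2 n \<tau>2') \<in> \<psi>}"

definition safety_relation :: "((nat \<Rightarrow> 'e1) \<times> (nat \<Rightarrow> 'e2)) set \<Rightarrow> bool" where
  "safety_relation \<psi> \<longleftrightarrow> safe_closure \<psi> \<subseteq> \<psi>"

definition scons :: "'e \<Rightarrow> (nat \<Rightarrow> 'e) \<Rightarrow> (nat \<Rightarrow> 'e)" where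
  "scons e \<tau> = (\<lambda>i. case i of 0 \<Rightarrow> e | Suc j \<Rightarrow> \<tau> j)"

definition deriv :: "'e1 \<Rightarrow> 'e2 \<Rightarrow> ((nat \<Rightarrow> 'e1) \<times> (nat \<Rightarrow> 'e2)) set \<Rightarrow> ((nat \<Rightarrow> 'e1) \<times> (nat \<Rightarrow> 'e2)) set" where
  "deriv e1 e2 \<psi> = {(\<tau>1, \<tau>2). (scons e1 \<tau>1, scons e2 \<tau>2) \<in> \<psi>}"

definition feF :: "('s1, 'e1) lts \<Rightarrow> ('s2, 'e2) lts
   \<Rightarrow> ('s1 \<times> 's2 \<times> ((nat \<Rightarrow> 'e1) \<times> (nat \<Rightarrow> 'e2)) set) set
   \<Rightarrow> ('s1 \<times> 's2 \<times> ((nat \<Rightarrow> 'e1) \<times> (nat \<Rightarrow> 'e2)) set) set" where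
  "feF TS1 TS2 R = {(s1, s2, \<psi>). \<forall>e1 s1'. weak_step TS1 s1 e1 s1' \<longrightarrow>
      (\<exists>e2 s2'. weak_step TS2 s2 e2 s2' \<and> deriv e1 e2 \<psi> \<noteq> {} \<and> (s1', s2', deriv e1 e2 \<psi>) \<in> R)}"

definition fe :: "('s1, 'e1) lts \<Rightarrow> ('s2, 'e2) lts
   \<Rightarrow> ('s1 \<times> 's2 \<times> ((nat \<Rightarrow> 'e1) \<times> (nat \<Rightarrow> 'e2)) set) set" where
  "fe TS1 TS2 = gfp (feF TS1 TS2)"

end

theory Submission
  imports Defs
begin

text \<open>Follow a trace of TS1 step by step: at each step, unfolding fe yields a matching weak
  step of TS2 together with the derivative of the current relation, which stays nonempty.
  After n steps the current relation is the derivative of \<psi> along the first n events of both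
  traces, so every pair of prefixes of the two traces extends to a pair in \<psi>; that is, the
  pair of traces lies in the safety closure of \<psi>, hence in \<psi>.\<close>

lemma feF_mono: "mono (feF TS1 TS2)"
  unfolding mono_def feF_def by blast

lemma fe_unfold: "fe TS1 TS2 = feF TS1 TS2 (fe TS1 TS2)"
  unfolding fe_def by (rule gfp_unfold[OF feF_mono])

lemma fe_weak_step:
  assumes "(s1, s2, \<phi>) \<in> fe TS1 TS2" and "weak_step TS1 s1 e1 s1'"
  shows "\<exists>e2 s2'. weak_step TS2 s2 e2 s2' \<and> deriv e1 e2 \<phi> \<noteq> {}
           \<and> (s1', s2', deriv e1 e2 \<phi>) \<in> fe TS1 TS2"
  using assms fe_unfold[of TS1 TS2] unfolding feF_def by blast

lemma deriv_nonempty_imp_nonempty: "deriv e1 e2 \<phi> \<noteq> {} \<Longrightarrow> \<phi> \<noteq> {}"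
  unfolding deriv_def by blast

definition prefix_deriv :: "(nat \<Rightarrow> 'e1) \<Rightarrow> (nat \<Rightarrow> 'e2) \<Rightarrow> nat
    \<Rightarrow> ((nat \<Rightarrow> 'e1) \<times> (nat \<Rightarrow> 'e2)) set \<Rightarrow> ((nat \<Rightarrow> 'e1) \<times> (nat \<Rightarrow> 'e2)) set" where
  "prefix_deriv \<tau>1 \<tau>2 n \<psi> = {(\<tau>1', \<tau>2'). (prefix_app \<tau>1 n \<tau>1', prefix_app \<tau>2 n \<tau>2') \<in> \<psi>}"

lemma prefix_app_0 [simp]: "prefix_app \<tau> 0 \<tau>' = \<tau>'"
  unfolding prefix_app_def by simp

lemma prefix_app_scons: "prefix_app \<tau> n (scons (\<tau> n) \<tau>') = prefix_app \<tau> (Suc n) \<tau>'"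
proof
  fix i
  show "prefix_app \<tau> n (scons (\<tau> n) \<tau>') i = prefix_app \<tau> (Suc n) \<tau>' i"
  proof (cases "i - n")
    case 0
    then show ?thesis by (auto simp: prefix_app_def scons_def less_Suc_eq)
  next
    case (Suc k)
    then have "k = i - Suc n" by arith
    with Suc show ?thesis by (auto simp: prefix_app_def scons_def)
  qed
qed

lemma prefix_deriv_0 [simp]: "prefix_deriv \<tau>1 \<tau>2 0 \<psi> = \<psi>"
  unfolding prefix_deriv_def by simp

lemma prefix_deriv_Suc:
  "prefix_deriv \<tau>1 \<tau>2 (Suc n) \<psi> = deriv (\<tau>1 n) (\<tau>2 n) (prefix_deriv \<tau>1 \<tau>2 n \<psi>)"
  unfolding prefix_deriv_def deriv_def by (simp add: prefix_app_scons)

lemma safe_closure_iff_prefix_deriv_nonempty: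
  "(\<tau>1, \<tau>2) \<in> safe_closure \<psi> \<longleftrightarrow> (\<forall>n. prefix_deriv \<tau>1 \<tau>2 n \<psi> \<noteq> {})"
  unfolding safe_closure_def prefix_deriv_def by blast

lemma fe_trace_matched:
  fixes TS1 :: "('s1, 'e1) lts" and TS2 :: "('s2, 'e2) lts"
  assumes fe: "(s1, s2, \<psi>) \<in> fe TS1 TS2" and "\<tau>1 \<in> Traces TS1 s1"
  shows "\<exists>\<tau>2 \<in> Traces TS2 s2. \<forall>n. prefix_deriv \<tau>1 \<tau>2 n \<psi> \<noteq> {}"
proof -
  obtain \<pi>1 where \<pi>1_0: "\<pi>1 0 = s1" and \<pi>1_step: "\<And>i. weak_step TS1 (\<pi>1 i) (\<tau>1 i) (\<pi>1 (Suc i))"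
    using \<open>\<tau>1 \<in> Traces TS1 s1\<close> unfolding Traces_def by blast
  \<comment> \<open>a triple (e, s, \<phi>) records the event just taken by TS2, its state and the current relation;
    the event of the initial triple is arbitrary\<close>
  define P where "P n x \<longleftrightarrow> (\<pi>1 n, fst (snd x), snd (snd x)) \<in> fe TS1 TS2
      \<and> (n = 0 \<longrightarrow> snd x = (s2, \<psi>))" for n and x :: "'e2 \<times> 's2 \<times> _"
  define Q where "Q n x y \<longleftrightarrow> weak_step TS2 (fst (snd x)) (fst y) (fst (snd y))
      \<and> snd (snd y) = deriv (\<tau>1 n) (fst y) (snd (snd x)) \<and> snd (snd y) \<noteq> {}"
    for n and x y :: "'e2 \<times> 's2 \<times> _"
  have "\<exists>f. \<forall>n. P n (f n) \<and> Q n (f n) (f (Suc n))"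
  proof (rule dependent_nat_choice)
    show "\<exists>x. P 0 x"
      using fe \<pi>1_0 unfolding P_def by force
    show "\<exists>y. P (Suc n) y \<and> Q n x y" if "P n x" for x n
      using fe_weak_step[OF _ \<pi>1_step[of n], of "fst (snd x)" "snd (snd x)"] that
      unfolding P_def Q_def by force
  qed
  then obtain f where P: "\<And>n. P n (f n)" and Q: "\<And>n. Q n (f n) (f (Suc n))"
    by blast
  define \<tau>2 where "\<tau>2 n = fst (f (Suc n))" for n
  have current: "snd (snd (f n)) = prefix_deriv \<tau>1 \<tau>2 n \<psi>" for n
  proof (induction n)
    case 0
    then show ?case using P[of 0] unfolding P_def by simp
  next
    case (Suc n)
    then show ?case using Q[of n] unfolding Q_def \<tau>2_def by (simp add: prefix_deriv_Suc)
  qed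
  have "\<tau>2 \<in> Traces TS2 s2"
    unfolding Traces_def
  proof (intro CollectI exI conjI allI)
    show "fst (snd (f 0)) = s2"
      using P[of 0] unfolding P_def by simp
    show "weak_step TS2 (fst (snd (f i))) (\<tau>2 i) (fst (snd (f (Suc i))))" for i
      using Q[of i] unfolding Q_def \<tau>2_def by simp
  qed
  moreover have "prefix_deriv \<tau>1 \<tau>2 n \<psi> \<noteq> {}" for n
  proof -
    have "prefix_deriv \<tau>1 \<tau>2 (Suc n) \<psi> \<noteq> {}"
      using Q[of n] current[of "Suc n"] unfolding Q_def by metis
    then show ?thesis
      unfolding prefix_deriv_Suc by (rule deriv_nonempty_imp_nonempty)
  qed
  ultimately show ?thesis by blast
qed

theorem mainTheorem5:
  fixes TS1 :: "('s1, 'e1) lts" and TS2 :: "('s2, 'e2) lts"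
    and \<psi> :: "((nat \<Rightarrow> 'e1) \<times> (nat \<Rightarrow> 'e2)) set"
  assumes "safety_relation \<psi>"
    and "(init TS1, init TS2, \<psi>) \<in> fe TS1 TS2"
  shows "\<forall>\<tau>1 \<in> Traces TS1 (init TS1). \<exists>\<tau>2 \<in> Traces TS2 (init TS2). (\<tau>1, \<tau>2) \<in> \<psi>"
proof
  fix \<tau>1 assume "\<tau>1 \<in> Traces TS1 (init TS1)"
  then obtain \<tau>2 where "\<tau>2 \<in> Traces TS2 (init TS2)" and "\<forall>n. prefix_deriv \<tau>1 \<tau>2 n \<psi> \<noteq> {}"
    using fe_trace_matched[OF assms(2)] by blast
  moreover from this(2) have "(\<tau>1, \<tau>2) \<in> safe_closure \<psi>"
    by (simp add: safe_closure_iff_prefix_deriv_nonempty)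
  then have "(\<tau>1, \<tau>2) \<in> \<psi>"
    using assms(1) unfolding safety_relation_def by blast
  ultimately show "\<exists>\<tau>2 \<in> Traces TS2 (init TS2). (\<tau>1, \<tau>2) \<in> \<psi>" by blast
qed

end
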